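(* (i) For every IFA $\mathcal{A}$ with $n$ states there is a deterministic finite automaton with at most $2^n$ states accepting $L(\mathcal{A})$. (ii) For every $n \ge 3$ there exists an IFA with $n$ states such that every deterministic finite automaton accepting its language has at least $2^n$ states.
   Context: A $\mathbb{Q}$-weighted automaton $\mathcal{A} = (Q, \Sigma, M, \alpha, \eta)$ consists of a finite state set $Q$, finite alphabet $\Sigma$, $M : \Sigma \to \mathbb{Q}^{Q\times Q}$, initial row vector $\alpha \in \mathbb{Q}^Q$, final column vector $\eta \in \mathbb{Q}^Q$; with $M(a_1\cdots a_k) = M(a_1)\cdots M(a_k)$, it assigns $L_\mathcal{A}(w) = \alpha M(w)\eta$ to each $w \in \Sigma^*$. It is an IFA if $L_\mathcal{A}(w) \in \{0,1\}$ for all $w$, and then $L(\mathcal{A}) = \{w \mid L_\mathcal{A}(w) = 1\}$. The number of states of $\mathcal{A}$ is $|Q|$. *)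

theory Defs
  imports Complex_Main
begin

text \<open>Q-weighted automata with state set Q = {0..<n}; M a is an n x n matrix,
  alpha an initial row vector, eta a final column vector (entries outside {0..<n} unused).\<close>

fun mat_word :: "nat \<Rightarrow> ('a \<Rightarrow> nat \<Rightarrow> nat \<Rightarrow> rat) \<Rightarrow> 'a list \<Rightarrow> nat \<Rightarrow> nat \<Rightarrow> rat" where
  "mat_word n M [] = (\<lambda>i j. if i = j then 1 else 0)"
| "mat_word n M (a # w) = (\<lambda>i j. \<Sum>k<n. M a i k * mat_word n M w k j)"

definition wa_weight :: "nat \<Rightarrow> ('a \<Rightarrow> nat \<Rightarrow> nat \<Rightarrow> rat) \<Rightarrow> (nat \<Rightarrow> rat) \<Rightarrow> (nat \<Rightarrow> rat) \<Rightarrow> 'a list \<Rightarrow> rat" where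
  "wa_weight n M \<alpha> \<eta> w = (\<Sum>i<n. \<Sum>j<n. \<alpha> i * mat_word n M w i j * \<eta> j)"

definition is_IFA :: "'a set \<Rightarrow> nat \<Rightarrow> ('a \<Rightarrow> nat \<Rightarrow> nat \<Rightarrow> rat) \<Rightarrow> (nat \<Rightarrow> rat) \<Rightarrow> (nat \<Rightarrow> rat) \<Rightarrow> bool" where
  "is_IFA \<Sigma> n M \<alpha> \<eta> \<longleftrightarrow> (\<forall>w \<in> lists \<Sigma>. wa_weight n M \<alpha> \<eta> w \<in> {0, 1})"

definition IFA_lang :: "'a set \<Rightarrow> nat \<Rightarrow> ('a \<Rightarrow> nat \<Rightarrow> nat \<Rightarrow> rat) \<Rightarrow> (nat \<Rightarrow> rat) \<Rightarrow> (nat \<Rightarrow> rat) \<Rightarrow> 'a list set" where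
  "IFA_lang \<Sigma> n M \<alpha> \<eta> = {w \<in> lists \<Sigma>. wa_weight n M \<alpha> \<eta> w = 1}"

definition is_DFA :: "'a set \<Rightarrow> nat set \<Rightarrow> (nat \<Rightarrow> 'a \<Rightarrow> nat) \<Rightarrow> nat \<Rightarrow> nat set \<Rightarrow> bool" where
  "is_DFA \<Sigma> S \<delta> s0 F \<longleftrightarrow> finite S \<and> s0 \<in> S \<and> F \<subseteq> S \<and> (\<forall>q \<in> S. \<forall>a \<in> \<Sigma>. \<delta> q a \<in> S)"

definition DFA_lang :: "'a set \<Rightarrow> (nat \<Rightarrow> 'a \<Rightarrow> nat) \<Rightarrow> nat \<Rightarrow> nat set \<Rightarrow> 'a list set" where
  "DFA_lang \<Sigma> \<delta> s0 F = {w \<in> lists \<Sigma>. foldl \<delta> s0 w \<in> F}"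

end

theory Submission
  imports Defs
begin

(* The weight of u v is the product of the row vector alpha M(u) with the column vector M(v) eta.
  The columns M(x) eta of all words x span a space of dimension at most n, which is already
  spanned by the columns of at most n test words X. So if u and u' are accepted after the same
  test words, alpha M(u) - alpha M(u') annihilates all columns, and u, u' have the same residual
  language; as weights are 0 or 1, the set {x \<in> X. u x is accepted} thus serves as a DFA state.
  For the lower bound, letters a < n copy coordinate a of the row vector into every coordinate
  and letters n + k erase coordinate k. From the all-ones vector, erasing letters reach every
  0/1 vector, and two different ones are separated by a single copying letter. *)

lemma sum_delta_mult:
  "(\<Sum>k<(n::nat). (if i = k then 1 else 0) * f k) = (if i < n then f i else (0::'b::semiring_1))"
  by (induction n) (auto simp: less_Suc_eq)

lemma sum_mult_delta:
  "(\<Sum>k<(n::nat). f k * (if k = j then 1 else 0)) = (if j < n then f j else (0::'b::semiring_1))"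
  by (induction n) (auto simp: less_Suc_eq)

lemma mat_word_append:
  assumes "i < n"
  shows "mat_word n M (u @ v) i j = (\<Sum>k<n. mat_word n M u i k * mat_word n M v k j)"
  using assms
proof (induction u arbitrary: i)
  case Nil
  then show ?case by (simp add: sum_delta_mult)
next
  case (Cons a u)
  have "mat_word n M ((a # u) @ v) i j
      = (\<Sum>l<n. \<Sum>k<n. M a i l * mat_word n M u l k * mat_word n M v k j)"
    by (simp add: Cons.IH sum_distrib_left mult.assoc)
  also have "\<dots> = (\<Sum>k<n. \<Sum>l<n. M a i l * mat_word n M u l k * mat_word n M v k j)"
    by (rule sum.swap)
  also have "\<dots> = (\<Sum>k<n. mat_word n M (a # u) i k * mat_word n M v k j)"
    by (simp add: sum_distrib_right)
  finally show ?case .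
qed

lemma mat_word_single: "j < n \<Longrightarrow> mat_word n M [a] i j = M a i j"
  by (simp add: sum_mult_delta)

definition left_vec ::
  "nat \<Rightarrow> ('a \<Rightarrow> nat \<Rightarrow> nat \<Rightarrow> rat) \<Rightarrow> (nat \<Rightarrow> rat) \<Rightarrow> 'a list \<Rightarrow> nat \<Rightarrow> rat" where
  "left_vec n M \<alpha> u k = (\<Sum>i<n. \<alpha> i * mat_word n M u i k)"

definition right_vec ::
  "nat \<Rightarrow> ('a \<Rightarrow> nat \<Rightarrow> nat \<Rightarrow> rat) \<Rightarrow> (nat \<Rightarrow> rat) \<Rightarrow> 'a list \<Rightarrow> nat \<Rightarrow> rat" where
  "right_vec n M \<eta> v k = (\<Sum>j<n. mat_word n M v k j * \<eta> j)"

lemma wa_weight_append: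
  "wa_weight n M \<alpha> \<eta> (u @ v) = (\<Sum>k<n. left_vec n M \<alpha> u k * right_vec n M \<eta> v k)"
proof -
  have "wa_weight n M \<alpha> \<eta> (u @ v)
      = (\<Sum>i<n. \<Sum>j<n. \<Sum>k<n. \<alpha> i * mat_word n M u i k * (mat_word n M v k j * \<eta> j))"
    unfolding wa_weight_def
    by (simp add: mat_word_append sum_distrib_left sum_distrib_right mult.assoc)
  also have "\<dots> = (\<Sum>i<n. \<Sum>k<n. \<Sum>j<n. \<alpha> i * mat_word n M u i k * (mat_word n M v k j * \<eta> j))"
    by (rule sum.cong[OF refl], rule sum.swap)
  also have "\<dots> = (\<Sum>k<n. \<Sum>i<n. \<Sum>j<n. \<alpha> i * mat_word n M u i k * (mat_word n M v k j * \<eta> j))"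
    by (rule sum.swap)
  also have "\<dots> = (\<Sum>k<n. left_vec n M \<alpha> u k * right_vec n M \<eta> v k)"
    unfolding left_vec_def right_vec_def sum_product by (simp add: mult.assoc)
  finally show ?thesis .
qed

lemma wa_weight_eq_left_vec: "wa_weight n M \<alpha> \<eta> w = (\<Sum>j<n. left_vec n M \<alpha> w j * \<eta> j)"
  unfolding wa_weight_def left_vec_def by (subst sum.swap) (simp add: sum_distrib_right)

lemma left_vec_Nil: "j < n \<Longrightarrow> left_vec n M \<alpha> [] j = \<alpha> j"
  by (simp add: left_vec_def sum_mult_delta)

lemma left_vec_snoc:
  assumes "j < n"
  shows "left_vec n M \<alpha> (w @ [a]) j = (\<Sum>k<n. left_vec n M \<alpha> w k * M a k j)"
proof -
  have "left_vec n M \<alpha> (w @ [a]) j = (\<Sum>i<n. \<Sum>k<n. \<alpha> i * mat_word n M w i k * M a k j)"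
    unfolding left_vec_def
    by (simp add: mat_word_append mat_word_single assms sum_distrib_left mult.assoc
        del: mat_word.simps)
  also have "\<dots> = (\<Sum>k<n. \<Sum>i<n. \<alpha> i * mat_word n M w i k * M a k j)"
    by (rule sum.swap)
  also have "\<dots> = (\<Sum>k<n. left_vec n M \<alpha> w k * M a k j)"
    unfolding left_vec_def by (simp add: sum_distrib_right)
  finally show ?thesis .
qed

lemma test_set_for_linear_combinations:
  fixes g :: "'i \<Rightarrow> 'x \<Rightarrow> 'f::field"
  assumes "finite I"
  shows "\<exists>X \<subseteq> D. finite X \<and> card X \<le> card I \<and>
    (\<forall>c. (\<forall>x\<in>X. (\<Sum>k\<in>I. c k * g k x) = 0) \<longrightarrow> (\<forall>x\<in>D. (\<Sum>k\<in>I. c k * g k x) = 0))"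
  using assms
proof (induction I arbitrary: g rule: finite_induct)
  case empty
  show ?case by (intro exI[of _ "{}"]) auto
next
  case (insert i I)
  show ?case
  proof (cases "\<forall>x\<in>D. g i x = 0")
    case True
    obtain X where X: "X \<subseteq> D" "finite X" "card X \<le> card I"
      and test: "\<And>c. \<forall>x\<in>X. (\<Sum>k\<in>I. c k * g k x) = 0 \<Longrightarrow> \<forall>x\<in>D. (\<Sum>k\<in>I. c k * g k x) = 0"
      using insert.IH[of g] by blast
    have reduce: "(\<Sum>k\<in>insert i I. c k * g k x) = (\<Sum>k\<in>I. c k * g k x)" if "x \<in> D" for c x
      using insert.hyps True that by simp
    show ?thesis
    proof (intro exI[of _ X] conjI allI impI)
      show "X \<subseteq> D" "finite X" "card X \<le> card (insert i I)"
        using X insert.hyps by auto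
      fix c assume "\<forall>x\<in>X. (\<Sum>k\<in>insert i I. c k * g k x) = 0"
      then have "\<forall>x\<in>X. (\<Sum>k\<in>I. c k * g k x) = 0"
        using reduce X(1) by (simp add: subset_eq del: sum.insert)
      then show "\<forall>x\<in>D. (\<Sum>k\<in>insert i I. c k * g k x) = 0"
        using test reduce by simp
    qed
  next
    case False
    then obtain x0 where x0: "x0 \<in> D" "g i x0 \<noteq> 0" by blast
    (* Eliminate along x0: every h k vanishes at x0, and a combination of the g k differs from
      the same combination of the h k by a multiple of its value at x0. *)
    define h where "h k x = g k x - g k x0 / g i x0 * g i x" for k x
    obtain X where X: "X \<subseteq> D" "finite X" "card X \<le> card I"
      and test: "\<And>c. \<forall>x\<in>X. (\<Sum>k\<in>I. c k * h k x) = 0 \<Longrightarrow> \<forall>x\<in>D. (\<Sum>k\<in>I. c k * h k x) = 0"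
      using insert.IH[of h] by blast
    have pivot: "(\<Sum>k\<in>insert i I. c k * g k x)
        = (\<Sum>k\<in>I. c k * h k x) + (\<Sum>k\<in>insert i I. c k * g k x0) * g i x / g i x0" for c x
    proof -
      have "(\<Sum>k\<in>I. c k * h k x) =
          (\<Sum>k\<in>I. c k * g k x) - g i x / g i x0 * (\<Sum>k\<in>I. c k * g k x0)"
        by (simp add: h_def algebra_simps sum_subtractf sum_distrib_left)
      then show ?thesis
        using insert.hyps x0(2) by (simp add: field_simps)
    qed
    show ?thesis
    proof (intro exI[of _ "insert x0 X"] conjI allI impI)
      show "insert x0 X \<subseteq> D" "finite (insert x0 X)" "card (insert x0 X) \<le> card (insert i I)"
        using X x0 insert.hyps by (auto simp: card_insert_if)
      fix c assume vanish: "\<forall>x\<in>insert x0 X. (\<Sum>k\<in>insert i I. c k * g k x) = 0"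
      then have at_x0: "(\<Sum>k\<in>insert i I. c k * g k x0) = 0" by blast
      have reduce: "(\<Sum>k\<in>insert i I. c k * g k x) = (\<Sum>k\<in>I. c k * h k x)" for x
        unfolding pivot[of c x] at_x0 by simp
      have "\<forall>x\<in>X. (\<Sum>k\<in>I. c k * h k x) = 0"
        using vanish unfolding reduce by blast
      then show "\<forall>x\<in>D. (\<Sum>k\<in>insert i I. c k * g k x) = 0"
        unfolding reduce by (rule test)
    qed
  qed
qed

lemma foldl_in_DFA_states:
  assumes "is_DFA \<Sigma> S \<delta> s0 F" "q \<in> S" "w \<in> lists \<Sigma>"
  shows "foldl \<delta> q w \<in> S"
  using assms(2,3)
proof (induction w arbitrary: q)
  case (Cons a w)
  then show ?case using assms(1) unfolding is_DFA_def by simp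
qed simp

lemma DFA_card_ge_separated_words:
  assumes dfa: "is_DFA \<Sigma> S \<delta> s0 F"
    and words: "\<And>i. i \<in> I \<Longrightarrow> f i \<in> lists \<Sigma>"
    and separated: "\<And>i j. i \<in> I \<Longrightarrow> j \<in> I \<Longrightarrow> i \<noteq> j \<Longrightarrow>
      \<exists>x \<in> lists \<Sigma>. (f i @ x \<in> DFA_lang \<Sigma> \<delta> s0 F) \<noteq> (f j @ x \<in> DFA_lang \<Sigma> \<delta> s0 F)"
  shows "card I \<le> card S"
proof (rule card_inj_on_le)
  show "inj_on (\<lambda>i. foldl \<delta> s0 (f i)) I"
  proof (rule inj_onI, rule ccontr)
    fix i j assume "i \<in> I" "j \<in> I" "foldl \<delta> s0 (f i) = foldl \<delta> s0 (f j)" "i \<noteq> j"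
    then show False
      using separated[of i j] words unfolding DFA_lang_def by auto
  qed
  show "(\<lambda>i. foldl \<delta> s0 (f i)) ` I \<subseteq> S"
    using foldl_in_DFA_states[OF dfa] dfa words unfolding is_DFA_def by auto
  show "finite S"
    using dfa unfolding is_DFA_def by simp
qed

lemma DFA_of_right_invariant_classifier:
  fixes \<phi> :: "'a list \<Rightarrow> 'b"
  assumes classes_finite: "finite (\<phi> ` lists \<Sigma>)"
    and right_invariant: "\<And>u v a. u \<in> lists \<Sigma> \<Longrightarrow> v \<in> lists \<Sigma> \<Longrightarrow> a \<in> \<Sigma> \<Longrightarrow>
      \<phi> u = \<phi> v \<Longrightarrow> \<phi> (u @ [a]) = \<phi> (v @ [a])"
    and saturating: "\<And>u v. u \<in> L \<Longrightarrow> v \<in> lists \<Sigma> \<Longrightarrow> \<phi> u = \<phi> v \<Longrightarrow> v \<in> L"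
    and L: "L \<subseteq> lists \<Sigma>"
  shows "\<exists>S \<delta> s0 F. is_DFA \<Sigma> S \<delta> s0 F \<and> card S \<le> card (\<phi> ` lists \<Sigma>) \<and>
    DFA_lang \<Sigma> \<delta> s0 F = L"
proof -
  obtain h :: "'b \<Rightarrow> nat" where h: "inj_on h (\<phi> ` lists \<Sigma>)"
    using finite_imp_inj_to_nat_seg[OF classes_finite] by blast
  define state where "state u = h (\<phi> u)" for u
  have states: "state ` lists \<Sigma> = h ` \<phi> ` lists \<Sigma>"
    unfolding state_def by (rule image_image[symmetric])
  have state_eq: "state u = state v \<longleftrightarrow> \<phi> u = \<phi> v" if "u \<in> lists \<Sigma>" "v \<in> lists \<Sigma>" for u v
  proof -
    have "\<phi> u \<in> \<phi> ` lists \<Sigma>" "\<phi> v \<in> \<phi> ` lists \<Sigma>"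
      using that by simp_all
    then show ?thesis unfolding state_def by (rule inj_on_eq_iff[OF h])
  qed
  define rep where "rep q = (SOME u. u \<in> lists \<Sigma> \<and> state u = q)" for q
  have rep: "rep (state u) \<in> lists \<Sigma> \<and> \<phi> (rep (state u)) = \<phi> u" if "u \<in> lists \<Sigma>" for u
  proof -
    have "rep (state u) \<in> lists \<Sigma> \<and> state (rep (state u)) = state u"
      unfolding rep_def by (rule someI[of _ u]) (simp add: that)
    then show ?thesis using state_eq that by blast
  qed
  define \<delta> where "\<delta> q a = state (rep q @ [a])" for q a
  have \<delta>_state: "\<delta> (state u) a = state (u @ [a])" if "u \<in> lists \<Sigma>" "a \<in> \<Sigma>" for u a
  proof -
    have "\<phi> (rep (state u) @ [a]) = \<phi> (u @ [a])"
      using rep[OF that(1)] right_invariant[of "rep (state u)" u a] that by blast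
    then show ?thesis unfolding \<delta>_def state_def by simp
  qed
  have run: "foldl \<delta> (state []) w = state w" if "w \<in> lists \<Sigma>" for w
    using that
  proof (induction w rule: rev_induct)
    case (snoc a w)
    then show ?case by (simp add: \<delta>_state)
  qed simp
  have "is_DFA \<Sigma> (state ` lists \<Sigma>) \<delta> (state []) (state ` L)"
    unfolding is_DFA_def
  proof (intro conjI ballI)
    show "finite (state ` lists \<Sigma>)"
      unfolding states using classes_finite by (rule finite_imageI)
    show "state [] \<in> state ` lists \<Sigma>" "state ` L \<subseteq> state ` lists \<Sigma>"
      using L by auto
    fix q a assume "q \<in> state ` lists \<Sigma>" and a: "a \<in> \<Sigma>"
    then obtain u where "u \<in> lists \<Sigma>" "q = state u" by blast
    then show "\<delta> q a \<in> state ` lists \<Sigma>"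
      using \<delta>_state[of u a] a by auto
  qed
  moreover have "card (state ` lists \<Sigma>) \<le> card (\<phi> ` lists \<Sigma>)"
    unfolding states by (rule card_image_le[OF classes_finite])
  moreover have "DFA_lang \<Sigma> \<delta> (state []) (state ` L) = L"
  proof -
    have "foldl \<delta> (state []) w \<in> state ` L \<longleftrightarrow> w \<in> L" if w: "w \<in> lists \<Sigma>" for w
      unfolding run[OF w]
    proof
      assume "state w \<in> state ` L"
      then obtain u where u: "u \<in> L" "state w = state u" by blast
      moreover have "u \<in> lists \<Sigma>" using u(1) L by blast
      ultimately show "w \<in> L"
        using saturating[of u w] state_eq[of w u] w by simp
    qed simp
    then show ?thesis
      unfolding DFA_lang_def using L by blast
  qed
  ultimately show ?thesis by blast
qed

lemma IFA_to_DFA_card_le_pow: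
  assumes ifa: "is_IFA \<Sigma> n M \<alpha> \<eta>"
  shows "\<exists>S \<delta> s0 F. is_DFA \<Sigma> S \<delta> s0 F \<and> card S \<le> 2 ^ n \<and>
    DFA_lang \<Sigma> \<delta> s0 F = IFA_lang \<Sigma> n M \<alpha> \<eta>"
proof -
  define W where "W = wa_weight n M \<alpha> \<eta>"
  define comb where "comb c x = (\<Sum>k<n. c k * right_vec n M \<eta> x k)" for c x
  obtain X where X: "X \<subseteq> lists \<Sigma>" "finite X" "card X \<le> n"
    and test: "\<And>c. \<forall>x\<in>X. comb c x = 0 \<Longrightarrow> \<forall>x\<in>lists \<Sigma>. comb c x = 0"
    using test_set_for_linear_combinations[of "{..<n}" "lists \<Sigma>" "\<lambda>k x. right_vec n M \<eta> x k"]
    unfolding comb_def by auto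
  have W01: "W w = 0 \<or> W w = 1" if "w \<in> lists \<Sigma>" for w
    using ifa that unfolding is_IFA_def W_def by auto
  define \<phi> where "\<phi> u = {x \<in> X. W (u @ x) = 1}" for u
  have same_continuations: "W (u @ x) = W (v @ x)"
    if uv: "u \<in> lists \<Sigma>" "v \<in> lists \<Sigma>" "\<phi> u = \<phi> v" and x: "x \<in> lists \<Sigma>" for u v x
  proof -
    define c where "c k = left_vec n M \<alpha> u k - left_vec n M \<alpha> v k" for k
    have comb_c: "comb c y = W (u @ y) - W (v @ y)" for y
      unfolding comb_def W_def wa_weight_append c_def by (simp add: left_diff_distrib sum_subtractf)
    have "comb c y = 0" if y: "y \<in> X" for y
    proof -
      have "u @ y \<in> lists \<Sigma>" "v @ y \<in> lists \<Sigma>"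
        using uv y X(1) by auto
      moreover have "W (u @ y) = 1 \<longleftrightarrow> W (v @ y) = 1"
        using uv(3) y unfolding \<phi>_def by blast
      ultimately show ?thesis
        unfolding comb_c using W01 by (metis eq_iff_diff_eq_0)
    qed
    then show ?thesis
      using test[of c] x unfolding comb_c by simp
  qed
  have classes: "\<phi> ` lists \<Sigma> \<subseteq> Pow X"
    unfolding \<phi>_def by auto
  have "\<exists>S \<delta> s0 F. is_DFA \<Sigma> S \<delta> s0 F \<and> card S \<le> card (\<phi> ` lists \<Sigma>) \<and>
      DFA_lang \<Sigma> \<delta> s0 F = IFA_lang \<Sigma> n M \<alpha> \<eta>"
  proof (rule DFA_of_right_invariant_classifier)
    show "finite (\<phi> ` lists \<Sigma>)"
      using classes X(2) by (simp add: finite_subset)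
    show "\<phi> (u @ [a]) = \<phi> (v @ [a])"
      if uv: "u \<in> lists \<Sigma>" "v \<in> lists \<Sigma>" "\<phi> u = \<phi> v" and a: "a \<in> \<Sigma>" for u v a
    proof -
      have "W ((u @ [a]) @ x) = W ((v @ [a]) @ x)" if "x \<in> X" for x
        using same_continuations[OF uv, of "a # x"] a X(1) that by auto
      then show ?thesis unfolding \<phi>_def by auto
    qed
    show "v \<in> IFA_lang \<Sigma> n M \<alpha> \<eta>"
      if "u \<in> IFA_lang \<Sigma> n M \<alpha> \<eta>" "v \<in> lists \<Sigma>" "\<phi> u = \<phi> v" for u v
      using same_continuations[of u v "[]"] that unfolding IFA_lang_def W_def by auto
    show "IFA_lang \<Sigma> n M \<alpha> \<eta> \<subseteq> lists \<Sigma>"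
      unfolding IFA_lang_def by blast
  qed
  moreover have "card (\<phi> ` lists \<Sigma>) \<le> 2 ^ n"
  proof -
    have "card (\<phi> ` lists \<Sigma>) \<le> card (Pow X)"
      using classes X(2) by (simp add: card_mono)
    also have "\<dots> \<le> 2 ^ n"
      using X(2,3) by (simp add: card_Pow)
    finally show ?thesis .
  qed
  ultimately show ?thesis
    using order_trans by blast
qed

definition copy_erase_mat :: "nat \<Rightarrow> nat \<Rightarrow> nat \<Rightarrow> nat \<Rightarrow> rat" where
  "copy_erase_mat n a i j =
    (if a < n then (if i = a then 1 else 0) else (if i = j \<and> j \<noteq> a - n then 1 else 0))"

lemma left_vec_copy:
  assumes "j < n" "a < n"
  shows "left_vec n (copy_erase_mat n) \<alpha> (w @ [a]) j = left_vec n (copy_erase_mat n) \<alpha> w a"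
  using assms by (simp add: left_vec_snoc copy_erase_mat_def sum_mult_delta)

lemma left_vec_erase:
  assumes "j < n" "n \<le> a"
  shows "left_vec n (copy_erase_mat n) \<alpha> (w @ [a]) j =
    (if j = a - n then 0 else left_vec n (copy_erase_mat n) \<alpha> w j)"
proof -
  have "copy_erase_mat n a k j = (if j = a - n then 0 else (if k = j then 1 else 0))" for k
    using assms by (simp add: copy_erase_mat_def)
  then show ?thesis
    using assms by (simp add: left_vec_snoc sum_mult_delta)
qed

lemma left_vec_copy_erase_01:
  "j < n \<Longrightarrow> left_vec n (copy_erase_mat n) (\<lambda>_. 1) w j \<in> {0, 1}"
proof (induction w arbitrary: j rule: rev_induct)
  case (snoc a w)
  then show ?case
    by (cases "a < n") (simp_all add: left_vec_copy left_vec_erase)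
qed (simp add: left_vec_Nil)

lemma left_vec_erase_letters:
  "j < n \<Longrightarrow>
    left_vec n (copy_erase_mat n) (\<lambda>_. 1) (map ((+) n) ks) j = (if j \<in> set ks then 0 else 1)"
proof (induction ks arbitrary: j rule: rev_induct)
  case (snoc k ks)
  then show ?case by (simp add: left_vec_erase)
qed (simp add: left_vec_Nil)

lemma wa_weight_copy_erase:
  assumes "0 < n"
  shows "wa_weight n (copy_erase_mat n) \<alpha> (\<lambda>j. if j = 0 then 1 else 0) w =
    left_vec n (copy_erase_mat n) \<alpha> w 0"
  using assms by (simp add: wa_weight_eq_left_vec sum_mult_delta)

lemma copy_erase_is_IFA:
  assumes "0 < n"
  shows "is_IFA \<Sigma> n (copy_erase_mat n) (\<lambda>_. 1) (\<lambda>j. if j = 0 then 1 else 0)"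
  unfolding is_IFA_def wa_weight_copy_erase[OF assms] using left_vec_copy_erase_01 assms by blast

lemma copy_erase_DFA_card_ge:
  assumes n: "0 < n" and dfa: "is_DFA {..<2 * n} S \<delta> s0 F"
    and lang: "DFA_lang {..<2 * n} \<delta> s0 F =
      IFA_lang {..<2 * n} n (copy_erase_mat n) (\<lambda>_. 1) (\<lambda>j. if j = 0 then 1 else 0)"
  shows "2 ^ n \<le> card S"
proof -
  define \<Sigma> :: "nat set" where "\<Sigma> = {..<2 * n}"
  define reach where "reach T = map ((+) n) (sorted_list_of_set ({..<n} - T))" for T
  have reach_word: "reach T \<in> lists \<Sigma>" for T
    unfolding reach_def \<Sigma>_def by auto
  have accepts: "reach T @ [k] \<in> DFA_lang \<Sigma> \<delta> s0 F \<longleftrightarrow> k \<in> T" if "k < n" for T k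
  proof -
    have "reach T @ [k] \<in> lists \<Sigma>"
      using reach_word that unfolding \<Sigma>_def by simp
    moreover have "left_vec n (copy_erase_mat n) (\<lambda>_. 1) (reach T) k = (if k \<in> T then 1 else 0)"
      unfolding reach_def using left_vec_erase_letters that by simp
    ultimately show ?thesis
      using that n unfolding lang \<Sigma>_def IFA_lang_def
      by (simp add: wa_weight_copy_erase left_vec_copy)
  qed
  have "card (Pow {..<n}) \<le> card S"
  proof (rule DFA_card_ge_separated_words[OF dfa[folded \<Sigma>_def]])
    show "reach T \<in> lists \<Sigma>" for T
      by (rule reach_word)
    fix T T' assume "T \<in> Pow {..<n}" "T' \<in> Pow {..<n}" "T \<noteq> T'"
    then obtain k where "k < n" "k \<in> T \<longleftrightarrow> k \<notin> T'"
      by blast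
    then show "\<exists>x \<in> lists \<Sigma>.
        (reach T @ x \<in> DFA_lang \<Sigma> \<delta> s0 F) \<noteq> (reach T' @ x \<in> DFA_lang \<Sigma> \<delta> s0 F)"
      using accepts unfolding \<Sigma>_def by (intro bexI[of _ "[k]"]) auto
  qed
  then show ?thesis
    by (simp add: card_Pow)
qed

theorem corollary2:
  shows "(\<forall>(\<Sigma> :: 'a set) n M \<alpha> \<eta>. finite \<Sigma> \<and> is_IFA \<Sigma> n M \<alpha> \<eta> \<longrightarrow>
            (\<exists>S \<delta> s0 F. is_DFA \<Sigma> S \<delta> s0 F \<and> card S \<le> 2 ^ n \<and>
                        DFA_lang \<Sigma> \<delta> s0 F = IFA_lang \<Sigma> n M \<alpha> \<eta>))
       \<and> (\<forall>n \<ge> 3. \<exists>(\<Sigma> :: nat set) M \<alpha> \<eta>. finite \<Sigma> \<and> is_IFA \<Sigma> n M \<alpha> \<eta> \<and>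
            (\<forall>S \<delta> s0 F. is_DFA \<Sigma> S \<delta> s0 F \<and> DFA_lang \<Sigma> \<delta> s0 F = IFA_lang \<Sigma> n M \<alpha> \<eta>
                 \<longrightarrow> card S \<ge> 2 ^ n))"
proof (intro conjI allI impI)
  fix \<Sigma> :: "'a set" and n M \<alpha> \<eta>
  assume "finite \<Sigma> \<and> is_IFA \<Sigma> n M \<alpha> \<eta>"
  then show "\<exists>S \<delta> s0 F. is_DFA \<Sigma> S \<delta> s0 F \<and> card S \<le> 2 ^ n \<and>
      DFA_lang \<Sigma> \<delta> s0 F = IFA_lang \<Sigma> n M \<alpha> \<eta>"
    using IFA_to_DFA_card_le_pow by blast
next
  fix n :: nat
  assume "3 \<le> n"
  then have n: "0 < n" by simp
  show "\<exists>(\<Sigma> :: nat set) M \<alpha> \<eta>. finite \<Sigma> \<and> is_IFA \<Sigma> n M \<alpha> \<eta> \<and>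
      (\<forall>S \<delta> s0 F. is_DFA \<Sigma> S \<delta> s0 F \<and> DFA_lang \<Sigma> \<delta> s0 F = IFA_lang \<Sigma> n M \<alpha> \<eta>
         \<longrightarrow> card S \<ge> 2 ^ n)"
    using copy_erase_is_IFA[OF n, of "{..<2 * n}"] copy_erase_DFA_card_ge[OF n] by blast
qed

end
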